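(* Assume the setup in the context, including Assumption Generic. Then, for $P$-almost every $z$, the set $\arg\min_{t\in T}Q(t,z)$ contains at most one point (i.e., the argmin of $Q(\cdot,z)$ over $T$ is unique almost surely).
   Context: Assumption Absolute Continuity: $z$ is an absolutely continuous random vector in $\mathbb{R}^{d_z}$ with distribution $P$, and $\mathcal{Z}\subset\mathbb{R}^{d_z}$ is a measurable set with $P(z\in\mathcal{Z})=1$. Assumption Manifold: $T=\bigcup_{j\in J}T_j$ is a disjoint union of finitely or countably many second-countable Hausdorff manifolds, possibly with boundary or corner; here a manifold with boundary or corner of dimension $d$ is a space in which every point has a neighborhood diffeomorphic (via a continuously differentiable map with continuously differentiable inverse) to a relatively open subset of $\mathbb{R}_+^d=[0,\infty)^d$. For each $t\in T_j$, $A(t)$ is a given subset of the tangent cone of $T_j$ at $t$ (the set of derivatives at $0$ of differentiable curves in $T_j$ starting at $t$). For $\Delta\in A(t)$, $\frac{d}{dh}Q(t+h\Delta,z)|_{h=0}$ denotes the (one-sided) directional derivative of $Q(\cdot,z)$ at $t$ in the direction $\Delta$. Assumption Continuous Differentiability: $Q:T\times\mathcal{Z}\to\mathbb{R}$ and for each $j\in J$: (a) $Q$ is continuous on $T_j\times\mathcal{Z}$; (b) for every $(t,z)\in T_j\times\mathcal{Z}$, $Q(t,z)$ is differentiable in $z$ and the derivative $\frac{d}{dz}Q(t,z)$ is continuous in $(t,z)$; (c) for every $(t,z)\in T_j\times\mathcal{Z}$ and $\Delta\in A(t)$, $Q$ is differentiable in $t$ in direction $\Delta$, and this derivative is continuous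 in $(t,z)$. Assumption Generic: let $\Xi=\{(t,s,z): z\in\mathcal{Z},\ t,s\in T,\ t\neq s\}$ and $\xi(t,s,z)=Q(t,z)-Q(s,z)$. For every $(t,s,z)\in\Xi$ at least one of the following holds: (a) $\xi(t,s,z)\neq0$; (b) there is $\Delta\in A(t)$ with $\frac{d}{dh}\xi(t+h\Delta,s,z)|_{h=0}<0$; (c) there is $\Delta\in A(s)$ with $\frac{d}{dh}\xi(t,s+h\Delta,z)|_{h=0}>0$; (d) $\frac{d}{dz}\xi(t,s,z)\neq0$. *)

theory Defs
  imports "HOL-Analysis.Analysis" "HOL-Analysis.Finite_Function_Topology" "HOL-Probability.Probability"
begin

text \<open>Coordinates: the space R^d is realised inside the real normed vector space
  of finitely supported real sequences (nat to real, finite support) as the vectors supported in {..<d}.\<close>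

type_synonym coord = "nat \<Rightarrow>\<^sub>0 real"

definition Rsp :: "nat \<Rightarrow> coord set" where
  "Rsp d = {x. Poly_Mapping.keys x \<subseteq> {..<d}}"

definition quadrant :: "nat \<Rightarrow> coord set" where
  "quadrant d = {x \<in> Rsp d. \<forall>i. 0 \<le> Poly_Mapping.lookup x i}"

definition C1_on :: "coord set \<Rightarrow> (coord \<Rightarrow> coord) \<Rightarrow> bool" where
  "C1_on S f \<longleftrightarrow> (\<exists>f' :: coord \<Rightarrow> (coord \<Rightarrow>\<^sub>L coord).
      (\<forall>x\<in>S. (f has_derivative blinfun_apply (f' x)) (at x within S)) \<and> continuous_on S f')"

definition chart_on :: "'p topology \<Rightarrow> nat \<Rightarrow> 'p set \<Rightarrow> ('p \<Rightarrow> coord) \<Rightarrow> bool" where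
  "chart_on X d U \<phi> \<longleftrightarrow> openin X U \<and> \<phi> ` U \<subseteq> quadrant d \<and>
     openin (top_of_set (quadrant d)) (\<phi> ` U) \<and>
     homeomorphic_map (subtopology X U) (top_of_set (\<phi> ` U)) \<phi>"

definition C1_atlas :: "'p topology \<Rightarrow> nat \<Rightarrow> ('p set \<times> ('p \<Rightarrow> coord)) set \<Rightarrow> bool" where
  "C1_atlas X d atlas \<longleftrightarrow>
     (\<forall>(U, \<phi>)\<in>atlas. chart_on X d U \<phi>) \<and>
     (\<forall>x\<in>topspace X. \<exists>(U, \<phi>)\<in>atlas. x \<in> U) \<and>
     (\<forall>(U, \<phi>)\<in>atlas. \<forall>(V, \<psi>)\<in>atlas. C1_on (\<phi> ` (U \<inter> V)) (\<psi> \<circ> inv_into U \<phi>))"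

definition manifold_with_corners :: "'p topology \<Rightarrow> nat \<Rightarrow> ('p set \<times> ('p \<Rightarrow> coord)) set \<Rightarrow> bool" where
  "manifold_with_corners X d atlas \<longleftrightarrow>
     Hausdorff_space X \<and> second_countable X \<and> C1_atlas X d atlas"

definition curve_vel :: "'p set \<Rightarrow> ('p \<Rightarrow> coord) \<Rightarrow> 'p \<Rightarrow> (real \<Rightarrow> 'p) \<Rightarrow> coord \<Rightarrow> bool" where
  "curve_vel U \<phi> t \<gamma> v \<longleftrightarrow> \<gamma> 0 = t \<and>
     (\<exists>\<epsilon>>0. \<gamma> ` {0..<\<epsilon>} \<subseteq> U \<and>
        (\<forall>h\<in>{0..<\<epsilon>}. (\<phi> \<circ> \<gamma>) differentiable (at h within {0..<\<epsilon>})) \<and>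
        ((\<phi> \<circ> \<gamma>) has_vector_derivative v) (at 0 within {0..<\<epsilon>}))"

text \<open>Tangent cone of the manifold at t, tangent vectors being represented by
  differentiable curves starting at t.\<close>
definition tangent_cone_curves :: "('p set \<times> ('p \<Rightarrow> coord)) set \<Rightarrow> 'p \<Rightarrow> (real \<Rightarrow> 'p) set" where
  "tangent_cone_curves atlas t = {\<gamma>. \<exists>(U, \<phi>)\<in>atlas. \<exists>v. curve_vel U \<phi> t \<gamma> v}"

definition coord_vels :: "'p set \<Rightarrow> ('p \<Rightarrow> coord) \<Rightarrow> 'p \<Rightarrow> (real \<Rightarrow> 'p) set \<Rightarrow> coord set" where
  "coord_vels U \<phi> t \<Gamma> = {v. \<exists>\<gamma>\<in>\<Gamma>. curve_vel U \<phi> t \<gamma> v}"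

definition dir_deriv :: "'p set \<Rightarrow> ('p \<Rightarrow> coord) \<Rightarrow> ('p \<Rightarrow> real) \<Rightarrow> 'p \<Rightarrow> coord \<Rightarrow> real \<Rightarrow> bool" where
  "dir_deriv U \<phi> f t v D \<longleftrightarrow>
     ((\<lambda>h. f (inv_into U \<phi> (\<phi> t + h *\<^sub>R v))) has_real_derivative D) (at 0 within {0..})"

end

theory Submission
  imports Defs
begin

text \<open>
  Suppose Q(., z) attains its minimum over T at two points t and s. Then Q(t, z) = Q(s, z), and no
  admissible direction at t (resp. s) can make the one-sided derivative of the difference negative
  (resp. positive), so genericity forces the z-gradients of Q(t, .) and Q(s, .) to differ. Pick a
  coordinate vector b and a rational slope q strictly between their b-components: near z, Q(t, .)
  stays below slope q on a thin cone around b, and Q(s, .) below slope -q on the cone around -b.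
  Both dominate the minimum value function, so two parameters z1, z2 carrying the same rational data
  cannot differ by a short vector in either cone (adding the four inequalities is contradictory).
  Such a set is locally a Lipschitz graph over the hyperplane orthogonal to b, hence Lebesgue-null;
  countably many choices of data cover every bad z, and P is absolutely continuous.

  Only pointwise differentiability enters.
\<close>

section \<open>First-order conditions at minimizers on a manifold with corners\<close>

lemma lookup_scaleR:
  "Poly_Mapping.lookup (r *\<^sub>R x) i = r *\<^sub>R Poly_Mapping.lookup (x :: 'a \<Rightarrow>\<^sub>0 'b::real_vector) i"
  unfolding scaleR_poly_mapping_def
  by (subst lookup_Abs_poly_mapping) (auto intro: finite_subset[OF _ finite_keys] simp: in_keys_iff)

lemma norm_lookup_le: "norm (Poly_Mapping.lookup (x :: 'a \<Rightarrow>\<^sub>0 'b::real_normed_vector) i) \<le> norm x"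
proof (cases "i \<in> Poly_Mapping.keys x")
  case True
  have "norm (Poly_Mapping.lookup x i) \<le> (\<Sum>n\<in>Poly_Mapping.keys x. norm (Poly_Mapping.lookup x n))"
    using True by (intro member_le_sum) auto
  then show ?thesis
    by (simp add: norm_poly_mapping_def dist_poly_mapping_def)
qed (simp add: in_keys_iff)

lemma bounded_linear_lookup:
  "bounded_linear (\<lambda>x :: 'a \<Rightarrow>\<^sub>0 'b::real_normed_vector. Poly_Mapping.lookup x i)"
  by (rule bounded_linear_intro[where K = 1]) (auto simp: lookup_add lookup_scaleR norm_lookup_le)

lemma DERIV_nonneg_at_right_local_min:
  fixes f :: "real \<Rightarrow> real"
  assumes "(f has_real_derivative D) (at_right x)" and "\<forall>\<^sub>F h in at_right x. f x \<le> f h"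
  shows "0 \<le> D"
proof (rule ccontr)
  assume "\<not> 0 \<le> D"
  then obtain d where "d > 0" and dec: "\<And>h. h > 0 \<Longrightarrow> h < d \<Longrightarrow> f (x + h) < f x"
    using has_real_derivative_neg_dec_right[OF assms(1)] by force
  then have "\<forall>\<^sub>F h in at_right x. f h < f x"
    unfolding eventually_at_right_field using dec[of "_ - x"] by (intro exI[of _ "x + d"]) auto
  with assms(2) have "\<forall>\<^sub>F h in at_right x. False"
    by eventually_elim simp
  then show False by simp
qed

lemma chart_inj_on: "chart_on X d U \<phi> \<Longrightarrow> inj_on \<phi> U"
  unfolding chart_on_def
  by (metis homeomorphic_imp_injective_map openin_subset topspace_subtopology_subset)

lemma curve_vel_inward:
  assumes chart: "chart_on X d U \<phi>" and cv: "curve_vel U \<phi> t \<gamma> v"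
  shows "v \<in> Rsp d" and "\<And>i. Poly_Mapping.lookup (\<phi> t) i = 0 \<Longrightarrow> 0 \<le> Poly_Mapping.lookup v i"
proof -
  obtain \<epsilon> where \<gamma>0: "\<gamma> 0 = t" and "\<epsilon> > 0" and \<gamma>U: "\<gamma> ` {0..<\<epsilon>} \<subseteq> U"
    and der: "((\<phi> \<circ> \<gamma>) has_vector_derivative v) (at 0 within {0..<\<epsilon>})"
    using cv unfolding curve_vel_def by blast
  have near: "\<forall>\<^sub>F h in at_right 0. h \<in> {0<..<\<epsilon>}"
    using eventually_at_right_real[OF \<open>\<epsilon> > 0\<close>] .
  have "at (0::real) within {0<..<\<epsilon>} = at_right 0"
    using \<open>\<epsilon> > 0\<close> by (intro at_within_nhd[of _ "{..<\<epsilon>}"]) auto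
  then have "((\<phi> \<circ> \<gamma>) has_vector_derivative v) (at_right 0)"
    using has_vector_derivative_within_subset[OF der, of "{0<..<\<epsilon>}"] by fastforce
  then have coord_der: "((\<lambda>h. Poly_Mapping.lookup ((\<phi> \<circ> \<gamma>) h) i)
      has_real_derivative Poly_Mapping.lookup v i) (at_right 0)" for i
    unfolding has_real_derivative_iff_has_vector_derivative
    by (rule bounded_linear.has_vector_derivative[OF bounded_linear_lookup])
  have in_quadrant: "(\<phi> \<circ> \<gamma>) h \<in> quadrant d" if "h \<in> {0..<\<epsilon>}" for h
    using that \<gamma>U chart by (force simp: chart_on_def)
  have t_quadrant: "\<phi> t \<in> quadrant d"
    using in_quadrant[of 0] \<open>\<epsilon> > 0\<close> by (simp add: \<gamma>0)
  have local_min: "0 \<le> D" if "((\<lambda>h. g ((\<phi> \<circ> \<gamma>) h)) has_real_derivative D) (at_right 0)"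
    and "\<And>y. y \<in> quadrant d \<Longrightarrow> g (\<phi> t) \<le> g y" for g D
  proof (rule DERIV_nonneg_at_right_local_min[OF that(1)])
    show "\<forall>\<^sub>F h in at_right 0. g ((\<phi> \<circ> \<gamma>) 0) \<le> g ((\<phi> \<circ> \<gamma>) h)"
      using near by eventually_elim (use in_quadrant that(2) in \<open>auto simp: \<gamma>0\<close>)
  qed
  show "0 \<le> Poly_Mapping.lookup v i" if "Poly_Mapping.lookup (\<phi> t) i = 0" for i
    by (rule local_min[OF coord_der]) (simp add: that quadrant_def)
  have "Poly_Mapping.lookup v i = 0" if "d \<le> i" for i
  proof -
    have vanish: "Poly_Mapping.lookup y i = 0" if "y \<in> quadrant d" for y
      using that \<open>d \<le> i\<close> by (auto simp: quadrant_def Rsp_def in_keys_iff)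
    have "0 \<le> Poly_Mapping.lookup v i"
      by (rule local_min[OF coord_der]) (simp add: vanish t_quadrant)
    moreover have "0 \<le> - Poly_Mapping.lookup v i"
      by (rule local_min[OF DERIV_minus[OF coord_der]]) (simp add: vanish t_quadrant)
    ultimately show ?thesis by simp
  qed
  then show "v \<in> Rsp d"
    by (auto simp: Rsp_def in_keys_iff not_less[symmetric])
qed

lemma eventually_ray_in_quadrant:
  assumes y: "y \<in> quadrant d" and v: "v \<in> Rsp d"
    and inward: "\<And>i. Poly_Mapping.lookup y i = 0 \<Longrightarrow> 0 \<le> Poly_Mapping.lookup v i"
  shows "\<forall>\<^sub>F h in at_right 0. y + h *\<^sub>R v \<in> quadrant d"
proof -
  have "\<forall>\<^sub>F h in at_right 0. \<forall>i\<in>Poly_Mapping.keys y.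
          0 < Poly_Mapping.lookup y i + h * Poly_Mapping.lookup v i"
  proof (rule eventually_ball_finite[OF finite_keys], rule ballI)
    fix i assume "i \<in> Poly_Mapping.keys y"
    then have "0 < Poly_Mapping.lookup y i"
      using y by (auto simp: quadrant_def in_keys_iff order_le_less)
    moreover have "((\<lambda>h. Poly_Mapping.lookup y i + h * Poly_Mapping.lookup v i)
        \<longlongrightarrow> Poly_Mapping.lookup y i) (at_right 0)"
      by (auto intro!: tendsto_eq_intros)
    ultimately show "\<forall>\<^sub>F h in at_right 0. 0 < Poly_Mapping.lookup y i + h * Poly_Mapping.lookup v i"
      by (simp add: order_tendstoD(1))
  qed
  with eventually_at_right_less show ?thesis
  proof eventually_elim
    case (elim h)
    have "Poly_Mapping.keys (h *\<^sub>R v) \<subseteq> Poly_Mapping.keys v"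
      by (auto simp: in_keys_iff lookup_scaleR)
    then have "Poly_Mapping.keys (y + h *\<^sub>R v) \<subseteq> {..<d}"
      using keys_add[of y "h *\<^sub>R v"] y v by (auto simp: quadrant_def Rsp_def)
    moreover have "0 \<le> Poly_Mapping.lookup (y + h *\<^sub>R v) i" for i
    proof (cases "i \<in> Poly_Mapping.keys y")
      case True
      then show ?thesis using elim by (simp add: lookup_add lookup_scaleR less_imp_le)
    next
      case False
      then show ?thesis using elim inward[of i] by (simp add: lookup_add lookup_scaleR in_keys_iff)
    qed
    ultimately show ?case
      by (simp add: quadrant_def Rsp_def)
  qed
qed

lemma eventually_ray_in_chart:
  assumes chart: "chart_on X d U \<phi>" and t: "t \<in> U" and cv: "curve_vel U \<phi> t \<gamma> v"
  shows "\<forall>\<^sub>F h in at_right 0. \<phi> t + h *\<^sub>R v \<in> \<phi> ` U"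
proof -
  have "openin (top_of_set (quadrant d)) (\<phi> ` U)" and "\<phi> ` U \<subseteq> quadrant d"
    using chart unfolding chart_on_def by blast+
  then obtain e where "e > 0" and ball: "\<And>y. y \<in> quadrant d \<Longrightarrow> dist y (\<phi> t) < e \<Longrightarrow> y \<in> \<phi> ` U"
    using imageI[OF t, of \<phi>] unfolding openin_euclidean_subtopology_iff by meson
  have "((\<lambda>h. \<phi> t + h *\<^sub>R v) \<longlongrightarrow> \<phi> t + 0 *\<^sub>R v) (at_right 0)"
    by (intro tendsto_intros)
  then have "\<forall>\<^sub>F h in at_right 0. dist (\<phi> t + h *\<^sub>R v) (\<phi> t) < e"
    using \<open>e > 0\<close> tendstoD by fastforce
  moreover have "\<forall>\<^sub>F h in at_right 0. \<phi> t + h *\<^sub>R v \<in> quadrant d"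
    using \<open>\<phi> ` U \<subseteq> quadrant d\<close> t curve_vel_inward[OF chart cv]
    by (intro eventually_ray_in_quadrant) auto
  ultimately show ?thesis
    by eventually_elim (rule ball)
qed

lemma dir_deriv_nonneg_at_min:
  assumes chart: "chart_on X d U \<phi>" and t: "t \<in> U" and v: "v \<in> coord_vels U \<phi> t \<Gamma>"
    and D: "dir_deriv U \<phi> f t v D" and min: "\<And>p. p \<in> U \<Longrightarrow> f t \<le> f p"
  shows "0 \<le> D"
proof (rule DERIV_nonneg_at_right_local_min)
  show "((\<lambda>h. f (inv_into U \<phi> (\<phi> t + h *\<^sub>R v))) has_real_derivative D) (at_right 0)"
    using D unfolding dir_deriv_def by (rule DERIV_subset) auto
  obtain \<gamma> where "curve_vel U \<phi> t \<gamma> v"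
    using v by (auto simp: coord_vels_def)
  from eventually_ray_in_chart[OF chart t this]
  show "\<forall>\<^sub>F h in at_right 0.
          f (inv_into U \<phi> (\<phi> t + 0 *\<^sub>R v)) \<le> f (inv_into U \<phi> (\<phi> t + h *\<^sub>R v))"
    by eventually_elim (use chart_inj_on[OF chart] t min in \<open>auto intro: inv_into_into\<close>)
qed

lemma dir_deriv_nonneg_at_min_on_manifold:
  assumes M: "manifold_with_corners X d atlas" and "(U, \<phi>) \<in> atlas" and "t \<in> U"
    and "v \<in> coord_vels U \<phi> t \<Gamma>" and "dir_deriv U \<phi> f t v D"
    and min: "\<And>p. p \<in> topspace X \<Longrightarrow> f t \<le> f p"
  shows "0 \<le> D"
proof -
  have chart: "chart_on X d U \<phi>"
    using M \<open>(U, \<phi>) \<in> atlas\<close> by (force simp: manifold_with_corners_def C1_atlas_def)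
  then have "U \<subseteq> topspace X"
    by (simp add: chart_on_def openin_subset)
  with assms show ?thesis
    by (intro dir_deriv_nonneg_at_min[OF chart]) auto
qed

lemma dir_deriv_nonpos_at_max_on_manifold:
  assumes "manifold_with_corners X d atlas" and "(U, \<phi>) \<in> atlas" and "t \<in> U"
    and "v \<in> coord_vels U \<phi> t \<Gamma>" and "dir_deriv U \<phi> f t v D"
    and "\<And>p. p \<in> topspace X \<Longrightarrow> f p \<le> f t"
  shows "D \<le> 0"
  using dir_deriv_nonneg_at_min_on_manifold[of X d atlas U \<phi> t v \<Gamma> "\<lambda>p. - f p" "- D"] assms
  by (auto simp: dir_deriv_def DERIV_minus)

section \<open>Sets whose short differences avoid a cone\<close>

lemma negligible_if_differences_avoid_cone:
  fixes S :: "'a::euclidean_space set"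
  assumes b: "norm b = 1" and c: "c < 1"
    and cone: "\<And>z1 z2. z1 \<in> S \<Longrightarrow> z2 \<in> S \<Longrightarrow> \<bar>b \<bullet> (z2 - z1)\<bar> \<le> c * norm (z2 - z1)"
  shows "negligible S"
proof -
  define P where "P y = y - (b \<bullet> y) *\<^sub>R b" for y
  have P_diff: "P z2 - P z1 = P (z2 - z1)" for z1 z2
    by (simp add: P_def algebra_simps inner_diff_right)
  have expansive: "(1 - c) * norm (z2 - z1) \<le> norm (P z2 - P z1)" if "z1 \<in> S" "z2 \<in> S" for z1 z2
  proof -
    have "norm (z2 - z1) \<le> norm (P (z2 - z1)) + \<bar>b \<bullet> (z2 - z1)\<bar>"
      using norm_triangle_ineq[of "P (z2 - z1)" "(b \<bullet> (z2 - z1)) *\<^sub>R b"] b by (simp add: P_def)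
    then show ?thesis
      using cone[OF that] by (simp add: P_diff algebra_simps)
  qed
  have inj: "inj_on P S"
  proof
    fix z1 z2 assume "z1 \<in> S" "z2 \<in> S" "P z1 = P z2"
    then show "z1 = z2"
      using expansive[of z1 z2] c by (simp add: mult_le_0_iff)
  qed
  have "negligible (P ` S)"
    by (rule negligible_subset[OF negligible_hyperplane[of b 0]])
       (use b in \<open>auto simp: P_def inner_diff_right dot_square_norm\<close>)
  then have "negligible (inv_into S P ` P ` S)"
  proof (rule negligible_locally_Lipschitz_image[OF order_refl])
    fix y assume "y \<in> P ` S"
    then obtain z where z: "z \<in> S" "y = P z" by blast
    show "\<exists>T B. open T \<and> y \<in> T \<and>
        (\<forall>y'\<in>P ` S \<inter> T. norm (inv_into S P y' - inv_into S P y) \<le> B * norm (y' - y))"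
    proof (intro exI[of _ UNIV] exI[of _ "1 / (1 - c)"] conjI ballI)
      fix y' assume "y' \<in> P ` S \<inter> UNIV"
      then obtain z' where z': "z' \<in> S" "y' = P z'" by blast
      show "norm (inv_into S P y' - inv_into S P y) \<le> 1 / (1 - c) * norm (y' - y)"
        using expansive[OF z(1) z'(1)] inj z z' c by (simp add: field_simps)
    qed simp_all
  qed
  then show ?thesis
    using inj by simp
qed

lemma negligible_if_near_differences_avoid_cone:
  fixes S :: "'a::euclidean_space set"
  assumes b: "norm b = 1" and c: "c < 1" and r: "r > 0"
    and cone: "\<And>z1 z2. z1 \<in> S \<Longrightarrow> z2 \<in> S \<Longrightarrow> norm (z2 - z1) < r \<Longrightarrow>
                 \<bar>b \<bullet> (z2 - z1)\<bar> \<le> c * norm (z2 - z1)"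
  shows "negligible S"
proof (rule locally_negligible_alt[THEN iffD2], intro ballI)
  fix z assume "z \<in> S"
  have "negligible (S \<inter> ball z (r / 2))"
  proof (rule negligible_if_differences_avoid_cone[OF b c])
    fix z1 z2 assume z1: "z1 \<in> S \<inter> ball z (r / 2)" and z2: "z2 \<in> S \<inter> ball z (r / 2)"
    then have "norm (z2 - z1) < r"
      using dist_triangle_half_l[of z1 z r z2] by (simp add: dist_norm norm_minus_commute)
    then show "\<bar>b \<bullet> (z2 - z1)\<bar> \<le> c * norm (z2 - z1)"
      using cone z1 z2 by simp
  qed
  moreover have "openin (top_of_set S) (S \<inter> ball z (r / 2))"
    by (simp add: openin_open_Int)
  ultimately show "\<exists>U. openin (top_of_set S) U \<and> z \<in> U \<and> negligible U"
    using \<open>z \<in> S\<close> r by (intro exI[of _ "S \<inter> ball z (r / 2)"]) simp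
qed

section \<open>Slope bounds on cones from differentiability\<close>

definition slope_bound_on_cone ::
    "('a::real_inner \<Rightarrow> real) \<Rightarrow> 'a \<Rightarrow> 'a \<Rightarrow> real \<Rightarrow> real \<Rightarrow> real \<Rightarrow> bool" where
  "slope_bound_on_cone f z e q c \<rho> \<longleftrightarrow>
     (\<forall>w. norm w < \<rho> \<and> c * norm w < e \<bullet> w \<longrightarrow> f (z + w) < f z + q * (e \<bullet> w))"

lemma slope_bound_on_cone_mono:
  assumes "slope_bound_on_cone f z e q c \<rho>" and "c \<le> c'" and "\<rho>' \<le> \<rho>"
  shows "slope_bound_on_cone f z e q c' \<rho>'"
  using assms unfolding slope_bound_on_cone_def
  by (meson mult_right_mono norm_ge_zero order_le_less_trans order_less_le_trans)

lemma inner_le_in_cone: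
  fixes e w g :: "'a::real_inner"
  assumes e: "norm e = 1" and c: "0 \<le> c" and cone: "c * norm w \<le> e \<bullet> w"
  shows "g \<bullet> w \<le> (g \<bullet> e) * (e \<bullet> w) + norm g * sqrt (1 - c\<^sup>2) * norm w"
proof -
  define u where "u = w - (e \<bullet> w) *\<^sub>R e"
  have "(norm u)\<^sup>2 = u \<bullet> u"
    by (rule power2_norm_eq_inner)
  also have "\<dots> = (norm w)\<^sup>2 - (e \<bullet> w)\<^sup>2"
    unfolding u_def
    by (simp only: inner_diff_left inner_diff_right inner_scaleR_left inner_scaleR_right)
       (simp add: e inner_commute power2_eq_square flip: power2_norm_eq_inner)
  also have "\<dots> \<le> (1 - c\<^sup>2) * (norm w)\<^sup>2"
    using power_mono[OF cone, of 2] c by (simp add: power_mult_distrib algebra_simps)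
  finally have "norm u \<le> sqrt (1 - c\<^sup>2) * norm w"
    by (metis real_le_rsqrt real_sqrt_abs abs_norm_cancel real_sqrt_mult)
  then have "g \<bullet> u \<le> norm g * (sqrt (1 - c\<^sup>2) * norm w)"
    by (meson norm_cauchy_schwarz mult_left_mono norm_ge_zero order_trans)
  moreover have "g \<bullet> w = (g \<bullet> e) * (e \<bullet> w) + g \<bullet> u"
    by (simp add: u_def inner_diff_right inner_commute)
  ultimately show ?thesis
    by (simp add: mult.assoc)
qed

lemma ex_aperture_sqrt_less:
  fixes K \<epsilon> :: real
  assumes "0 < \<epsilon>"
  shows "\<exists>c\<in>{1/2<..<1}. K * sqrt (1 - c\<^sup>2) < \<epsilon>"
proof -
  have "((\<lambda>c. K * sqrt (1 - c\<^sup>2)) \<longlongrightarrow> K * sqrt (1 - 1\<^sup>2)) (at_left 1)"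
    by (intro tendsto_intros)
  from order_tendstoD(2)[OF this, of \<epsilon>] have "\<forall>\<^sub>F c in at_left 1. K * sqrt (1 - c\<^sup>2) < \<epsilon>"
    using assms by simp
  moreover have "\<forall>\<^sub>F c in at_left (1::real). c \<in> {1/2<..<1}"
    by (rule eventually_at_left_real) simp
  ultimately have "\<forall>\<^sub>F c in at_left 1. c \<in> {1/2<..<1} \<and> K * sqrt (1 - c\<^sup>2) < \<epsilon>"
    by (simp add: eventually_conj_iff)
  then show ?thesis
    using eventually_happens'[OF trivial_limit_at_left_real] by blast
qed

lemma has_derivative_imp_slope_bound_on_cone:
  fixes f :: "'a::real_inner \<Rightarrow> real"
  assumes der: "(f has_derivative (\<lambda>h. g \<bullet> h)) (at z)" and e: "norm e = 1" and q: "g \<bullet> e < q"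
  shows "\<exists>c<1. \<exists>\<rho>>0. slope_bound_on_cone f z e q c \<rho>"
proof -
  define \<delta> where "\<delta> = q - g \<bullet> e"
  have "\<delta> > 0"
    using q by (simp add: \<delta>_def)
  obtain c where c: "1/2 < c" "c < 1" and small: "norm g * sqrt (1 - c\<^sup>2) < \<delta> / 8"
    using ex_aperture_sqrt_less[of "\<delta> / 8" "norm g"] \<open>\<delta> > 0\<close> by auto
  obtain \<rho> where "\<rho> > 0"
    and approx: "\<And>y. norm (y - z) < \<rho> \<Longrightarrow> norm (f y - f z - g \<bullet> (y - z)) \<le> \<delta> / 8 * norm (y - z)"
    using der \<open>\<delta> > 0\<close> unfolding has_derivative_at_alt by (meson divide_pos_pos zero_less_numeral)
  have "slope_bound_on_cone f z e q c \<rho>"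
    unfolding slope_bound_on_cone_def
  proof (intro allI impI, elim conjE)
    fix w assume "norm w < \<rho>" and cone: "c * norm w < e \<bullet> w"
    define a where "a = e \<bullet> w"
    have "0 \<le> c * norm w" and "norm w \<le> 2 * (c * norm w)"
      using c mult_right_mono[of 1 "2 * c" "norm w"] by auto
    then have "0 < a" and w_le: "norm w \<le> 2 * a"
      using cone by (auto simp: a_def)
    \<comment> \<open>The linearisation error and the component of g transverse to e each cost \<delta>/8 |w| \<le> \<delta>/4 a.\<close>
    have "\<bar>f (z + w) - f z - g \<bullet> w\<bar> \<le> \<delta> / 8 * norm w"
      using approx[of "z + w"] \<open>norm w < \<rho>\<close> by simp
    then have "f (z + w) - f z \<le> g \<bullet> w + \<delta> / 8 * norm w"
      by linarith
    also have "\<dots> \<le> (g \<bullet> e) * a + \<delta> / 4 * norm w"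
      using inner_le_in_cone[OF e _ less_imp_le[OF cone], of g] c small
        mult_right_mono[OF less_imp_le[OF small], of "norm w"] by (simp add: a_def)
    also have "\<dots> \<le> (g \<bullet> e) * a + \<delta> / 2 * a"
      using w_le \<open>\<delta> > 0\<close> by simp
    also have "\<dots> < q * a"
      using mult_pos_pos[OF \<open>\<delta> > 0\<close> \<open>0 < a\<close>] unfolding \<delta>_def by (simp add: field_simps)
    finally show "f (z + w) < f z + q * (e \<bullet> w)"
      by (simp add: a_def)
  qed
  then show ?thesis
    using c \<open>\<rho> > 0\<close> by blast
qed

lemma slope_bounds_of_separated_gradients:
  fixes f f' :: "'a::real_inner \<Rightarrow> real"
  assumes der: "(f has_derivative (\<lambda>h. g \<bullet> h)) (at z)" and der': "(f' has_derivative (\<lambda>h. g' \<bullet> h)) (at z)"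
    and b: "norm b = 1" and sep: "g \<bullet> b < g' \<bullet> b"
  shows "\<exists>q\<in>\<rat>. \<exists>c\<in>\<rat> \<inter> {0..<1}. \<exists>\<rho>\<in>\<rat> \<inter> {0<..}.
           slope_bound_on_cone f z b q c \<rho> \<and> slope_bound_on_cone f' z (- b) (- q) c \<rho>"
proof -
  obtain q where "q \<in> \<rat>" and q: "g \<bullet> b < q" "q < g' \<bullet> b"
    using Rats_dense_in_real[OF sep] by blast
  obtain c1 \<rho>1 where "c1 < 1" "\<rho>1 > 0" and bound: "slope_bound_on_cone f z b q c1 \<rho>1"
    using has_derivative_imp_slope_bound_on_cone[OF der b q(1)] by blast
  obtain c2 \<rho>2 where "c2 < 1" "\<rho>2 > 0" and bound': "slope_bound_on_cone f' z (- b) (- q) c2 \<rho>2"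
    using has_derivative_imp_slope_bound_on_cone[OF der', of "- b" "- q"] b q(2) by auto
  obtain c where "c \<in> \<rat>" and c: "max 0 (max c1 c2) < c" "c < 1"
    using Rats_dense_in_real[of "max 0 (max c1 c2)" 1] \<open>c1 < 1\<close> \<open>c2 < 1\<close> by auto
  obtain \<rho> where "\<rho> \<in> \<rat>" and \<rho>: "0 < \<rho>" "\<rho> < min \<rho>1 \<rho>2"
    using Rats_dense_in_real[of 0 "min \<rho>1 \<rho>2"] \<open>\<rho>1 > 0\<close> \<open>\<rho>2 > 0\<close> by auto
  have "slope_bound_on_cone f z b q c \<rho>" and "slope_bound_on_cone f' z (- b) (- q) c \<rho>"
    using slope_bound_on_cone_mono[OF bound] slope_bound_on_cone_mono[OF bound'] c \<rho> by auto
  with \<open>q \<in> \<rat>\<close> \<open>c \<in> \<rat>\<close> \<open>\<rho> \<in> \<rat>\<close> c \<rho> show ?thesis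
    by (intro bexI[of _ q] bexI[of _ c] bexI[of _ \<rho>] conjI) auto
qed

section \<open>Parameters with two minimizers of distinct gradients\<close>

lemma slope_bounds_at_minimizers_avoid_cone:
  assumes t: "is_arg_min (\<lambda>u. Q u z1) (\<lambda>u. u \<in> T) t" and s: "is_arg_min (\<lambda>u. Q u z2) (\<lambda>u. u \<in> T) s"
    and bound_t: "slope_bound_on_cone (Q t) z1 b q c \<rho>"
    and bound_s: "slope_bound_on_cone (Q s) z2 (- b) (- q) c \<rho>"
    and near: "norm (z2 - z1) < \<rho>"
  shows "b \<bullet> (z2 - z1) \<le> c * norm (z2 - z1)"
proof (rule ccontr)
  assume far: "\<not> ?thesis"
  then have "Q t (z1 + (z2 - z1)) < Q t z1 + q * (b \<bullet> (z2 - z1))"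
    using bound_t[unfolded slope_bound_on_cone_def, rule_format, of "z2 - z1"] near by simp
  moreover have "Q s (z2 + (z1 - z2)) < Q s z2 + (- q) * (- b \<bullet> (z1 - z2))"
    using bound_s[unfolded slope_bound_on_cone_def, rule_format, of "z1 - z2"] near far
    by (simp add: norm_minus_commute inner_diff_right)
  moreover have "Q s z2 \<le> Q t z2" and "Q t z1 \<le> Q s z1"
    using t s by (auto simp: is_arg_min_linorder)
  ultimately show False
    by (simp add: inner_diff_right algebra_simps)
qed

definition separated_minimizer_set ::
    "('p \<Rightarrow> 'a::real_inner \<Rightarrow> real) \<Rightarrow> 'p set \<Rightarrow> 'a \<Rightarrow> real \<Rightarrow> real \<Rightarrow> real \<Rightarrow> 'a set" where
  "separated_minimizer_set Q T b q c \<rho> =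
     {z. \<exists>t s. is_arg_min (\<lambda>u. Q u z) (\<lambda>u. u \<in> T) t \<and> is_arg_min (\<lambda>u. Q u z) (\<lambda>u. u \<in> T) s \<and>
               slope_bound_on_cone (Q t) z b q c \<rho> \<and> slope_bound_on_cone (Q s) z (- b) (- q) c \<rho>}"

lemma negligible_separated_minimizer_set:
  fixes Q :: "'p \<Rightarrow> 'a::euclidean_space \<Rightarrow> real"
  assumes "norm b = 1" and "c < 1" and "\<rho> > 0"
  shows "negligible (separated_minimizer_set Q T b q c \<rho>)"
    (is "negligible ?S")
proof -
  have one_side: "b \<bullet> (z2 - z1) \<le> c * norm (z2 - z1)"
    if "z1 \<in> ?S" "z2 \<in> ?S" "norm (z2 - z1) < \<rho>" for z1 z2
  proof -
    obtain t where "is_arg_min (\<lambda>u. Q u z1) (\<lambda>u. u \<in> T) t" "slope_bound_on_cone (Q t) z1 b q c \<rho>"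
      using \<open>z1 \<in> ?S\<close> by (auto simp: separated_minimizer_set_def)
    moreover obtain s where
      "is_arg_min (\<lambda>u. Q u z2) (\<lambda>u. u \<in> T) s" "slope_bound_on_cone (Q s) z2 (- b) (- q) c \<rho>"
      using \<open>z2 \<in> ?S\<close> by (auto simp: separated_minimizer_set_def)
    ultimately show ?thesis
      using slope_bounds_at_minimizers_avoid_cone \<open>norm (z2 - z1) < \<rho>\<close> by metis
  qed
  have "\<bar>b \<bullet> (z2 - z1)\<bar> \<le> c * norm (z2 - z1)" if "z1 \<in> ?S" "z2 \<in> ?S" "norm (z2 - z1) < \<rho>" for z1 z2
    using one_side[OF that] one_side[OF that(2,1)] that(3)
    by (simp add: norm_minus_commute inner_diff_right abs_le_iff)
  then show ?thesis
    using negligible_if_near_differences_avoid_cone assms by blast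
qed

lemma distinct_gradients_imp_separated_minimizers:
  fixes Q :: "'p \<Rightarrow> 'a::euclidean_space \<Rightarrow> real"
  assumes der: "\<And>t. t \<in> T \<Longrightarrow> (Q t has_derivative (\<lambda>h. G t \<bullet> h)) (at z)"
    and t: "is_arg_min (\<lambda>u. Q u z) (\<lambda>u. u \<in> T) t" and s: "is_arg_min (\<lambda>u. Q u z) (\<lambda>u. u \<in> T) s"
    and "G t \<noteq> G s"
  shows "\<exists>b\<in>Basis. \<exists>q\<in>\<rat>. \<exists>c\<in>\<rat> \<inter> {0..<1}. \<exists>\<rho>\<in>\<rat> \<inter> {0<..}.
           z \<in> separated_minimizer_set Q T b q c \<rho>"
proof -
  obtain b where b: "b \<in> Basis" and "G t \<bullet> b \<noteq> G s \<bullet> b"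
    using \<open>G t \<noteq> G s\<close> by (metis euclidean_eqI)
  obtain t' s' where t': "is_arg_min (\<lambda>u. Q u z) (\<lambda>u. u \<in> T) t'"
    and s': "is_arg_min (\<lambda>u. Q u z) (\<lambda>u. u \<in> T) s'" and sep: "G t' \<bullet> b < G s' \<bullet> b"
  proof (cases "G t \<bullet> b < G s \<bullet> b")
    case True
    then show ?thesis by (rule that[OF t s])
  next
    case False
    then show ?thesis using that[OF s t] \<open>G t \<bullet> b \<noteq> G s \<bullet> b\<close> by simp
  qed
  have "t' \<in> T" "s' \<in> T"
    using t' s' by (simp_all add: is_arg_min_def)
  then obtain q c \<rho> where "q \<in> \<rat>" "c \<in> \<rat> \<inter> {0..<1}" "\<rho> \<in> \<rat> \<inter> {0<..}"
    and "slope_bound_on_cone (Q t') z b q c \<rho>" "slope_bound_on_cone (Q s') z (- b) (- q) c \<rho>"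
    using slope_bounds_of_separated_gradients[OF der der norm_Basis[OF b] sep] by blast
  with b t' s' show ?thesis
    unfolding separated_minimizer_set_def by blast
qed

lemma negligible_minimizers_with_distinct_gradients:
  fixes Q :: "'p \<Rightarrow> 'a::euclidean_space \<Rightarrow> real"
  assumes der: "\<And>t z. t \<in> T \<Longrightarrow> z \<in> Z \<Longrightarrow> (Q t has_derivative (\<lambda>h. G t z \<bullet> h)) (at z)"
  shows "negligible {z \<in> Z. \<exists>t s. is_arg_min (\<lambda>u. Q u z) (\<lambda>u. u \<in> T) t \<and>
                                 is_arg_min (\<lambda>u. Q u z) (\<lambda>u. u \<in> T) s \<and> G t z \<noteq> G s z}"
    (is "negligible ?bad")
proof (rule negligible_subset)
  define I :: "('a \<times> real \<times> real \<times> real) set"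
    where "I = Basis \<times> \<rat> \<times> (\<rat> \<inter> {0..<1}) \<times> (\<rat> \<inter> {0<..})"
  have "countable I"
    unfolding I_def by (intro countable_SIGMA countable_finite[OF finite_Basis] countable_rat countable_Int1)
  then show "negligible (\<Union>(b, q, c, \<rho>)\<in>I. separated_minimizer_set Q T b q c \<rho>)"
    by (intro negligible_countable_Union) (auto simp: I_def intro!: negligible_separated_minimizer_set)
  show "?bad \<subseteq> (\<Union>(b, q, c, \<rho>)\<in>I. separated_minimizer_set Q T b q c \<rho>)"
  proof
    fix z assume "z \<in> ?bad"
    with distinct_gradients_imp_separated_minimizers[of T Q "\<lambda>t. G t z" z] der
    show "z \<in> (\<Union>(b, q, c, \<rho>)\<in>I. separated_minimizer_set Q T b q c \<rho>)"
      by (fastforce simp: I_def)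
  qed
qed

lemma AE_not_in_negligible:
  assumes "negligible N" and "sets P = sets borel" and "absolutely_continuous lborel P"
  shows "AE z in P. z \<notin> N"
proof -
  obtain N' where null: "N' \<in> null_sets lborel" and "N \<subseteq> N'"
    using assms(1) by (metis negligible_iff_null_sets null_sets_completion_iff2)
  have "AE z in P. z \<notin> N'"
    by (rule absolutely_continuous_AE[OF _ assms(3) AE_not_in[OF null]]) (simp add: assms(2))
  then show ?thesis
    using \<open>N \<subseteq> N'\<close> by (auto elim: eventually_mono)
qed

lemma AE_unique_arg_min_if_gradients_differ:
  fixes Q :: "'p \<Rightarrow> 'a::euclidean_space \<Rightarrow> real"
  assumes "sets P = sets borel" and "absolutely_continuous lborel P" and "AE z in P. z \<in> Z"
    and der: "\<And>t z. t \<in> T \<Longrightarrow> z \<in> Z \<Longrightarrow> (Q t has_derivative (\<lambda>h. G t z \<bullet> h)) (at z)"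
    and differ: "\<And>z t s. z \<in> Z \<Longrightarrow> is_arg_min (\<lambda>u. Q u z) (\<lambda>u. u \<in> T) t \<Longrightarrow>
                   is_arg_min (\<lambda>u. Q u z) (\<lambda>u. u \<in> T) s \<Longrightarrow> t \<noteq> s \<Longrightarrow> G t z \<noteq> G s z"
  shows "AE z in P. \<forall>t\<in>T. \<forall>s\<in>T. (\<forall>u\<in>T. Q t z \<le> Q u z) \<and> (\<forall>u\<in>T. Q s z \<le> Q u z) \<longrightarrow> t = s"
proof -
  have "negligible {z \<in> Z. \<exists>t s. is_arg_min (\<lambda>u. Q u z) (\<lambda>u. u \<in> T) t \<and>
                                  is_arg_min (\<lambda>u. Q u z) (\<lambda>u. u \<in> T) s \<and> G t z \<noteq> G s z}"
    using der by (rule negligible_minimizers_with_distinct_gradients)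
  from AE_not_in_negligible[OF this assms(1,2)] assms(3) show ?thesis
  proof eventually_elim
    case (elim z)
    show ?case
    proof (intro ballI impI)
      fix t s assume "t \<in> T" "s \<in> T" "(\<forall>u\<in>T. Q t z \<le> Q u z) \<and> (\<forall>u\<in>T. Q s z \<le> Q u z)"
      then have "is_arg_min (\<lambda>u. Q u z) (\<lambda>u. u \<in> T) t" "is_arg_min (\<lambda>u. Q u z) (\<lambda>u. u \<in> T) s"
        by (auto simp: is_arg_min_linorder)
      with elim differ show "t = s"
        by blast
    qed
  qed
qed

theorem lemma1:
  fixes J :: "'j set"
    and X :: "'j \<Rightarrow> 'p topology"
    and dim :: "'j \<Rightarrow> nat"
    and atlas :: "'j \<Rightarrow> ('p set \<times> ('p \<Rightarrow> coord)) set"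
    and T :: "'p set"
    and A :: "'p \<Rightarrow> (real \<Rightarrow> 'p) set"
    and P :: "'z::euclidean_space measure"
    and Z :: "'z set"
    and Q :: "'p \<Rightarrow> 'z \<Rightarrow> real"
  assumes
    \<comment> \<open>Assumption Absolute Continuity\<close>
    P_prob: "prob_space P"
    and P_borel: "sets P = sets borel"
    and P_ac: "absolutely_continuous lborel P"
    and Z_meas: "Z \<in> sets borel"
    and Z_full: "measure P Z = 1"
    \<comment> \<open>Assumption Manifold\<close>
    and J_countable: "countable J"
    and T_union: "T = (\<Union>j\<in>J. topspace (X j))"
    and T_disjoint: "disjoint_family_on (\<lambda>j. topspace (X j)) J"
    and T_manifold: "\<And>j. j \<in> J \<Longrightarrow> manifold_with_corners (X j) (dim j) (atlas j)"
    and A_tangent: "\<And>j t. j \<in> J \<Longrightarrow> t \<in> topspace (X j) \<Longrightarrow> A t \<subseteq> tangent_cone_curves (atlas j) t"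
    \<comment> \<open>Assumption Continuous Differentiability\<close>
    and Q_cont: "\<And>j. j \<in> J \<Longrightarrow>
       continuous_map (prod_topology (X j) (top_of_set Z)) euclideanreal (\<lambda>(t, z). Q t z)"
    and Q_diff_z: "\<And>j. j \<in> J \<Longrightarrow> \<exists>DZ :: 'p \<Rightarrow> 'z \<Rightarrow> 'z.
       (\<forall>t\<in>topspace (X j). \<forall>z\<in>Z. ((\<lambda>z'. Q t z') has_derivative (\<lambda>h. DZ t z \<bullet> h)) (at z)) \<and>
       continuous_map (prod_topology (X j) (top_of_set Z)) euclidean (\<lambda>(t, z). DZ t z)"
    and Q_diff_t: "\<And>j U \<phi> v. j \<in> J \<Longrightarrow> (U, \<phi>) \<in> atlas j \<Longrightarrow> \<exists>D :: 'p \<Rightarrow> 'z \<Rightarrow> real.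
       (\<forall>t\<in>U. \<forall>z\<in>Z. v \<in> coord_vels U \<phi> t (A t) \<longrightarrow> dir_deriv U \<phi> (\<lambda>t'. Q t' z) t v (D t z)) \<and>
       continuous_map
         (subtopology (prod_topology (X j) (top_of_set Z))
            {(t, z). t \<in> U \<and> z \<in> Z \<and> v \<in> coord_vels U \<phi> t (A t)})
         euclideanreal (\<lambda>(t, z). D t z)"
    \<comment> \<open>Assumption Generic\<close>
    and generic: "\<And>t s z. t \<in> T \<Longrightarrow> s \<in> T \<Longrightarrow> z \<in> Z \<Longrightarrow> t \<noteq> s \<Longrightarrow>
       Q t z - Q s z \<noteq> 0
       \<or> (\<exists>j\<in>J. t \<in> topspace (X j) \<and> (\<exists>(U, \<phi>)\<in>atlas j. t \<in> U \<and>
            (\<exists>v\<in>coord_vels U \<phi> t (A t). \<exists>D<0. dir_deriv U \<phi> (\<lambda>t'. Q t' z - Q s z) t v D)))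
       \<or> (\<exists>j\<in>J. s \<in> topspace (X j) \<and> (\<exists>(U, \<phi>)\<in>atlas j. s \<in> U \<and>
            (\<exists>v\<in>coord_vels U \<phi> s (A s). \<exists>D>0. dir_deriv U \<phi> (\<lambda>s'. Q t z - Q s' z) s v D)))
       \<or> frechet_derivative (\<lambda>z'. Q t z' - Q s z') (at z) \<noteq> (\<lambda>h. 0)"
  shows "AE z in P. \<forall>t\<in>T. \<forall>s\<in>T.
           (\<forall>u\<in>T. Q t z \<le> Q u z) \<and> (\<forall>u\<in>T. Q s z \<le> Q u z) \<longrightarrow> t = s"
proof -
  obtain G where G: "\<And>t z. t \<in> T \<Longrightarrow> z \<in> Z \<Longrightarrow> (Q t has_derivative (\<lambda>h. G t z \<bullet> h)) (at z)"
  proof -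
    have "\<forall>t\<in>T. \<forall>z\<in>Z. \<exists>g. (Q t has_derivative (\<lambda>h. g \<bullet> h)) (at z)"
      using Q_diff_z T_union by fast
    then show ?thesis
      using that by metis
  qed
  show ?thesis
  proof (rule AE_unique_arg_min_if_gradients_differ[OF P_borel P_ac prob_space.AE_prob_1[OF P_prob Z_full] G])
    fix z t s assume z: "z \<in> Z" and "is_arg_min (\<lambda>u. Q u z) (\<lambda>u. u \<in> T) t"
      and "is_arg_min (\<lambda>u. Q u z) (\<lambda>u. u \<in> T) s" and "t \<noteq> s"
    then have "t \<in> T" "s \<in> T" and t_min: "\<And>u. u \<in> T \<Longrightarrow> Q t z \<le> Q u z"
      and s_min: "\<And>u. u \<in> T \<Longrightarrow> Q s z \<le> Q u z"
      by (auto simp: is_arg_min_linorder)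
    show "G t z \<noteq> G s z"
    proof
      assume "G t z = G s z"
      then have "((\<lambda>z'. Q t z' - Q s z') has_derivative (\<lambda>h. 0)) (at z)"
        using has_derivative_diff[OF G[OF \<open>t \<in> T\<close> z] G[OF \<open>s \<in> T\<close> z]] by simp
      then have "frechet_derivative (\<lambda>z'. Q t z' - Q s z') (at z) = (\<lambda>h. 0)"
        by (rule frechet_derivative_at[symmetric])
      moreover have "Q t z - Q s z = 0"
        using t_min[OF \<open>s \<in> T\<close>] s_min[OF \<open>t \<in> T\<close>] by simp
      moreover have "0 \<le> D" if "j \<in> J" "(U, \<phi>) \<in> atlas j" "t \<in> U" "v \<in> coord_vels U \<phi> t (A t)"
        "dir_deriv U \<phi> (\<lambda>t'. Q t' z - Q s z) t v D" for j U \<phi> v D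
        using dir_deriv_nonneg_at_min_on_manifold[OF T_manifold that(2-5)] t_min T_union that(1) by auto
      moreover have "D \<le> 0" if "j \<in> J" "(U, \<phi>) \<in> atlas j" "s \<in> U" "v \<in> coord_vels U \<phi> s (A s)"
        "dir_deriv U \<phi> (\<lambda>s'. Q t z - Q s' z) s v D" for j U \<phi> v D
        using dir_deriv_nonpos_at_max_on_manifold[OF T_manifold that(2-5)] s_min T_union that(1) by auto
      ultimately show False
        using generic[OF \<open>t \<in> T\<close> \<open>s \<in> T\<close> z \<open>t \<noteq> s\<close>] by (simp add: Bex_def case_prod_beta) (meson not_le)
    qed
  qed
qed

end
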